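(* Let $n\in\{2,3\}$, let $\Gamma\subset\Gamma_\infty$ be a nonempty bounded relatively open set, let $0\neq\phi\in\mathscr{D}(\Gamma)$ be fixed (independent of $k$), and let $s\in\mathbb{R}$. Then for every constant $C<1/(2\sqrt2)$ there exists $k_0>0$ such that for all $k\ge k_0$, $$\|T_k\phi\|_{H^{s-1}_k(\Gamma)}\ge C\|\phi\|_{\tilde H^s_k(\Gamma)}.$$
   Context: $\Gamma_\infty:=\{\mathbf{x}\in\mathbb{R}^n:x_n=0\}$ is identified with $\mathbb{R}^{n-1}$; $\mathscr{D}(\Gamma)=C_0^\infty(\Gamma)$. Fourier transform: $\hat u(\boldsymbol{\xi})=(2\pi)^{-(n-1)/2}\int e^{-{\mathrm{i}}\boldsymbol{\xi}\cdot\mathbf{x}}u(\mathbf{x})\,\mathrm{d}\mathbf{x}$. $\|u\|_{H^s_k(\mathbb{R}^{n-1})}^2=\int(k^2+|\boldsymbol{\xi}|^2)^s|\hat u|^2\,\mathrm{d}\boldsymbol{\xi}$; $H^s(\Gamma)$ = restrictions to $\Gamma$ of $H^s(\mathbb{R}^{n-1})$ with the infimum-over-extensions norm $\|\cdot\|_{H^s_k(\Gamma)}$; $\tilde H^s(\Gamma)$ = closure of $\mathscr{D}(\Gamma)$ in $H^s(\mathbb{R}^{n-1})$ with norm $\|\cdot\|_{H^s_k(\mathbb{R}^{n-1})}$. $T_k\phi=(T_k^\infty\phi)|_\Gamma$ with $\widehat{T_k^\infty\phi}(\boldsymbol{\xi})=\frac{{\mathrm{i}}}{2}Z(\boldsymbol{\xi})\hat\phi(\boldsymbol{\xi})$,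 $Z(\boldsymbol{\xi})=\sqrt{k^2-|\boldsymbol{\xi}|^2}$ for $|\boldsymbol{\xi}|\le k$ and ${\mathrm{i}}\sqrt{|\boldsymbol{\xi}|^2-k^2}$ for $|\boldsymbol{\xi}|>k$ (the acoustic hypersingular operator on the planar screen $\Gamma$). *)

theory Defs
  imports "HOL-Analysis.Analysis"
begin

text \<open>The hyperplane Gamma_infinity is identified with the Euclidean space 'a, of dimension n-1.\<close>

coinductive smooth_fun :: "('a::euclidean_space \<Rightarrow> complex) \<Rightarrow> bool" where
  "(\<And>x. f differentiable (at x)) \<Longrightarrow>
   (\<And>i. i \<in> Basis \<Longrightarrow> smooth_fun (\<lambda>x. frechet_derivative f (at x) i)) \<Longrightarrow>
   smooth_fun f"

definition tsupp :: "('a::euclidean_space \<Rightarrow> complex) \<Rightarrow> 'a set" where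
  "tsupp f = closure {x. f x \<noteq> 0}"

definition test_fun :: "'a::euclidean_space set \<Rightarrow> ('a \<Rightarrow> complex) set" where
  "test_fun G = {f. smooth_fun f \<and> compact (tsupp f) \<and> tsupp f \<subseteq> G}"

definition fourier :: "('a::euclidean_space \<Rightarrow> complex) \<Rightarrow> 'a \<Rightarrow> complex" where
  "fourier u \<xi> = complex_of_real ((2 * pi) powr (- real DIM('a) / 2)) *
      (LINT x|lborel. cis (- (\<xi> \<bullet> x)) * u x)"

definition sob_weight :: "real \<Rightarrow> real \<Rightarrow> 'a::euclidean_space \<Rightarrow> real" where
  "sob_weight k s \<xi> = (k\<^sup>2 + (norm \<xi>)\<^sup>2) powr s"

text \<open>H^s_k(R^(n-1)) norm of the distribution whose Fourier transform is U.\<close>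
definition sob_norm_ft :: "real \<Rightarrow> real \<Rightarrow> ('a::euclidean_space \<Rightarrow> complex) \<Rightarrow> real" where
  "sob_norm_ft k s U = sqrt (LINT \<xi>|lborel. sob_weight k s \<xi> * (cmod (U \<xi>))\<^sup>2)"

definition in_sob_ft :: "real \<Rightarrow> real \<Rightarrow> ('a::euclidean_space \<Rightarrow> complex) \<Rightarrow> bool" where
  "in_sob_ft k s U \<longleftrightarrow> U \<in> borel_measurable lborel \<and>
      integrable lborel (\<lambda>\<xi>. sob_weight k s \<xi> * (cmod (U \<xi>))\<^sup>2)"

text \<open>The distributions with Fourier transforms U and V have the same restriction to G:
  the pairings with every test function psi in D(G) agree, where
  the pairing of u and psi equals the integral of (hat u)(xi) (hat psi)(-xi).\<close>
definition same_restr :: "'a::euclidean_space set \<Rightarrow> ('a \<Rightarrow> complex) \<Rightarrow> ('a \<Rightarrow> complex) \<Rightarrow> bool" where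
  "same_restr G U V \<longleftrightarrow> (\<forall>\<psi>\<in>test_fun G.
      (LINT \<xi>|lborel. U \<xi> * fourier \<psi> (- \<xi>)) = (LINT \<xi>|lborel. V \<xi> * fourier \<psi> (- \<xi>)))"

text \<open>H^s_k(G) norm of the restriction to G of the distribution with Fourier transform V:
  infimum over all extensions in H^s(R^(n-1)).\<close>
definition sob_norm_restr :: "real \<Rightarrow> real \<Rightarrow> 'a::euclidean_space set \<Rightarrow> ('a \<Rightarrow> complex) \<Rightarrow> real" where
  "sob_norm_restr k s G V = Inf {sob_norm_ft k s U | U. in_sob_ft k s U \<and> same_restr G U V}"

definition Zsym :: "real \<Rightarrow> 'a::euclidean_space \<Rightarrow> complex" where
  "Zsym k \<xi> = (if norm \<xi> \<le> k then complex_of_real (sqrt (k\<^sup>2 - (norm \<xi>)\<^sup>2))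
               else \<i> * complex_of_real (sqrt ((norm \<xi>)\<^sup>2 - k\<^sup>2)))"

definition Tk_ft :: "real \<Rightarrow> ('a::euclidean_space \<Rightarrow> complex) \<Rightarrow> 'a \<Rightarrow> complex" where
  "Tk_ft k \<phi> \<xi> = (\<i> / 2) * Zsym k \<xi> * fourier \<phi> \<xi>"

end

theory Submission
  imports Defs "HOL-Probability.Sinc_Integral"
begin

text \<open>Let U be any extension of the restriction of T_k phi to Gamma.  As phi is supported in
  Gamma, the pairings of U and of T_k phi with phi agree.  The imaginary part of the latter is
  A_k = 1/2 times the integral of sqrt(k^2 - |xi|^2) |hat phi(xi)|^2 over |xi| <= k, and by
  Cauchy-Schwarz the former is at most ||U||_(s-1) ||phi||_(1-s); hence
  ||T_k phi||_(H^(s-1)(Gamma)) ||phi||_(1-s) >= A_k.  Since hat phi decays rapidly, dominated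
  convergence gives A_k ~ k ||hat phi||^2 / 2 and ||phi||_sigma ~ k^sigma ||hat phi|| in L^2 as
  k tends to infinity, so ||T_k phi||_(H^(s-1)(Gamma)) / ||phi||_s eventually exceeds every C < 1/2.\<close>

definition partial_deriv :: "('a::euclidean_space \<Rightarrow> complex) \<Rightarrow> 'a \<Rightarrow> 'a \<Rightarrow> complex" where
  "partial_deriv f j x = frechet_derivative f (at x) j"

lemma smooth_fun_differentiable: "smooth_fun f \<Longrightarrow> f differentiable (at x)"
  by (erule smooth_fun.cases) auto

lemma smooth_fun_has_derivative:
  "smooth_fun f \<Longrightarrow> (f has_derivative frechet_derivative f (at x)) (at x)"
  using smooth_fun_differentiable frechet_derivative_works by blast

lemma smooth_fun_partial_deriv: "smooth_fun f \<Longrightarrow> j \<in> Basis \<Longrightarrow> smooth_fun (partial_deriv f j)"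
  unfolding partial_deriv_def[abs_def] by (erule smooth_fun.cases) auto

lemma smooth_fun_continuous_on: "smooth_fun f \<Longrightarrow> continuous_on S f"
  by (meson differentiable_at_imp_differentiable_on differentiable_imp_continuous_on
      smooth_fun_differentiable)

lemma smooth_fun_cnj: "smooth_fun f \<Longrightarrow> smooth_fun (\<lambda>x. cnj (f x))"
proof (coinduction arbitrary: f rule: smooth_fun.coinduct)
  case (smooth_fun f)
  have hd: "((\<lambda>x. cnj (f x)) has_derivative (\<lambda>v. cnj (frechet_derivative f (at x) v))) (at x)" for x
    using bounded_linear.has_derivative[OF bounded_linear_cnj smooth_fun_has_derivative[OF smooth_fun]] .
  have "frechet_derivative (\<lambda>x. cnj (f x)) (at x) i = cnj (partial_deriv f i x)" for x i
    by (simp add: partial_deriv_def flip: frechet_derivative_at[OF hd[of x]])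
  then have "(\<lambda>y. frechet_derivative (\<lambda>x. cnj (f x)) (at y) i) = (\<lambda>y. cnj (partial_deriv f i y))
      \<and> smooth_fun (partial_deriv f i)" if "i \<in> Basis" for i
    using smooth_fun smooth_fun_partial_deriv that by auto
  then show ?case
    using hd by (blast intro: differentiableI)
qed

lemma zero_outside_tsupp: "x \<notin> tsupp f \<Longrightarrow> f x = 0"
  unfolding tsupp_def using closure_subset[of "{x. f x \<noteq> 0}"] by auto

lemma tsupp_partial_deriv_subset: "tsupp (partial_deriv f j) \<subseteq> tsupp f"
proof -
  have "partial_deriv f j x = 0" if x: "x \<notin> tsupp f" for x
  proof -
    have "open (- tsupp f)" unfolding tsupp_def by auto
    have "((\<lambda>_. 0) has_derivative (\<lambda>_. 0)) (at x)" by simp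
    then have "(f has_derivative (\<lambda>_. 0)) (at x)"
      by (rule has_derivative_transform_within_open[OF _ \<open>open (- tsupp f)\<close>])
        (use x zero_outside_tsupp in auto)
    then have "frechet_derivative f (at x) = (\<lambda>_. 0)"
      by (rule frechet_derivative_at[symmetric])
    then show ?thesis
      by (simp add: partial_deriv_def)
  qed
  then show ?thesis unfolding tsupp_def[of "partial_deriv f j"]
    by (intro closure_minimal) (auto simp: tsupp_def)
qed

lemma test_funD:
  assumes "f \<in> test_fun G"
  shows test_fun_smooth: "smooth_fun f" and test_fun_compact_tsupp: "compact (tsupp f)"
  using assms unfolding test_fun_def by auto

lemma test_fun_partial_deriv: "f \<in> test_fun G \<Longrightarrow> j \<in> Basis \<Longrightarrow> partial_deriv f j \<in> test_fun G"
  using tsupp_partial_deriv_subset[of f j] smooth_fun_partial_deriv[of f j]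
    compact_Int_closed[of "tsupp f" "tsupp (partial_deriv f j)"]
  unfolding test_fun_def by (auto simp: tsupp_def Int_absorb1)

lemma test_fun_iterated_partial_deriv:
  "f \<in> test_fun G \<Longrightarrow> j \<in> Basis \<Longrightarrow> ((\<lambda>g. partial_deriv g j) ^^ m) f \<in> test_fun G"
  by (induction m) (auto intro: test_fun_partial_deriv)

lemma test_fun_cnj: "f \<in> test_fun G \<Longrightarrow> (\<lambda>x. cnj (f x)) \<in> test_fun G"
  using smooth_fun_cnj unfolding test_fun_def tsupp_def by auto

lemma test_fun_integrable:
  assumes "f \<in> test_fun G"
  shows "integrable lborel f"
proof -
  have "integrable lborel (\<lambda>x. indicator (tsupp f) x *\<^sub>R f x)"
    using assms by (intro borel_integrable_compact test_fun_compact_tsupp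
        smooth_fun_continuous_on test_fun_smooth)
  moreover have "(\<lambda>x. indicator (tsupp f) x *\<^sub>R f x) = f"
    using zero_outside_tsupp[of _ f] by (auto simp: indicator_def)
  ultimately show ?thesis by simp
qed

lemma test_fun_bounded:
  assumes "f \<in> test_fun G"
  obtains B where "\<And>x. norm (f x) \<le> B"
proof -
  have "compact (f ` tsupp f)"
    using assms by (intro compact_continuous_image smooth_fun_continuous_on test_fun_smooth
        test_fun_compact_tsupp)
  then obtain B where "\<And>x. x \<in> tsupp f \<Longrightarrow> norm (f x) \<le> B"
    using compact_imp_bounded bounded_iff by (metis imageI)
  then have "norm (f x) \<le> max B 0" for x
    using zero_outside_tsupp[of x f] by (cases "x \<in> tsupp f") (auto simp: le_max_iff_disj)
  then show ?thesis using that by blast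
qed

lemma test_fun_derivative_bounded:
  assumes "\<psi> \<in> test_fun G"
  obtains B where "\<And>y. onorm (frechet_derivative \<psi> (at y)) \<le> B"
proof -
  have "\<exists>B. \<forall>x. norm (partial_deriv \<psi> b x) \<le> B" if "b \<in> Basis" for b
    using test_fun_bounded[OF test_fun_partial_deriv[OF assms that]] by blast
  then obtain Bf where Bf: "\<And>b x. b \<in> Basis \<Longrightarrow> norm (partial_deriv \<psi> b x) \<le> Bf b"
    by metis
  have "onorm (frechet_derivative \<psi> (at y)) \<le> (\<Sum>b\<in>Basis. Bf b)" for y
  proof (rule onorm_le)
    fix v :: 'a
    define L where "L = frechet_derivative \<psi> (at y)"
    have lin: "linear L"
      unfolding L_def
      by (rule has_derivative_linear[OF smooth_fun_has_derivative[OF test_fun_smooth[OF assms]]])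
    have "L v = (\<Sum>b\<in>Basis. (v \<bullet> b) *\<^sub>R L b)"
      using linear_sum[OF lin] linear_scale[OF lin] euclidean_representation[of v]
      by (metis (no_types, lifting) sum.cong)
    then have "norm (L v) \<le> (\<Sum>b\<in>Basis. \<bar>v \<bullet> b\<bar> * norm (L b))"
      by (metis (no_types, lifting) norm_scaleR norm_sum sum.cong)
    also have "\<dots> \<le> (\<Sum>b\<in>Basis. norm v * Bf b)"
      using Bf by (intro sum_mono mult_mono) (auto simp: L_def partial_deriv_def Basis_le_norm)
    finally show "norm (frechet_derivative \<psi> (at y) v) \<le> (\<Sum>b\<in>Basis. Bf b) * norm v"
      by (simp add: L_def sum_distrib_left mult.commute)
  qed
  then show ?thesis using that by blast
qed

section \<open>Fourier transforms of test functions\<close>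

lemma integrable_lborel_translate_iff:
  fixes g :: "'a::euclidean_space \<Rightarrow> 'b::{banach,second_countable_topology}"
  assumes g: "g \<in> borel_measurable borel"
  shows "integrable lborel (\<lambda>x. g (x + c)) \<longleftrightarrow> integrable lborel g"
proof -
  have "(+) c \<in> borel_measurable lborel" by simp
  then show ?thesis
    using integrable_distr_eq[of "(+) c" lborel borel g] g by (simp add: lborel_distr_plus add.commute)
qed

lemma integral_lborel_translate:
  fixes g :: "'a::euclidean_space \<Rightarrow> 'b::{banach,second_countable_topology}"
  assumes g: "g \<in> borel_measurable borel"
  shows "(\<integral>x. g (x + c) \<partial>lborel) = integral\<^sup>L lborel g"
proof -
  have "(+) c \<in> borel_measurable lborel" by simp
  then show ?thesis
    using integral_distr[of "(+) c" lborel borel g] g by (simp add: lborel_distr_plus add.commute)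
qed

lemma borel_measurable_cis_mult:
  fixes f :: "'a::euclidean_space \<Rightarrow> complex"
  assumes "f \<in> borel_measurable borel"
  shows "(\<lambda>x. cis (- (\<xi> \<bullet> x)) * f x) \<in> borel_measurable borel"
  by (rule borel_measurable_times[OF borel_measurable_continuous_onI assms]) (intro continuous_intros)

lemma integral_cis_mult_translate:
  fixes g :: "'a::euclidean_space \<Rightarrow> complex"
  assumes "g \<in> borel_measurable borel"
  shows "(\<integral>x. cis (- (\<xi> \<bullet> x)) * g (x + c) \<partial>lborel)
       = cis (\<xi> \<bullet> c) * (\<integral>x. cis (- (\<xi> \<bullet> x)) * g x \<partial>lborel)"
proof -
  from borel_measurable_cis_mult[OF assms]
  have "(\<integral>x. cis (- (\<xi> \<bullet> (x + c))) * g (x + c) \<partial>lborel) = (\<integral>x. cis (- (\<xi> \<bullet> x)) * g x \<partial>lborel)"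
    by (rule integral_lborel_translate)
  moreover have "(\<lambda>x. cis (- (\<xi> \<bullet> x)) * g (x + c))
      = (\<lambda>x. cis (\<xi> \<bullet> c) * (cis (- (\<xi> \<bullet> (x + c))) * g (x + c)))"
    by (simp add: fun_eq_iff inner_add_right cis_mult mult.assoc[symmetric])
  ultimately show ?thesis
    by (simp only: integral_mult_right_zero)
qed

lemma tendsto_difference_quotient:
  fixes f :: "'a::real_normed_vector \<Rightarrow> complex"
  assumes fd: "(f has_derivative L) (at x)" and j: "j \<noteq> 0"
    and h0: "h \<longlonglongrightarrow> 0" and hnz: "\<And>n. h n \<noteq> 0"
  shows "(\<lambda>n. (f (x + h n *\<^sub>R j) - f x) / of_real (h n)) \<longlonglongrightarrow> L j"
proof -
  from fd have bl: "bounded_linear L"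
    and lim: "((\<lambda>v. norm (f (x + v) - f x - L v) / norm v) \<longlongrightarrow> 0) (at 0)"
    by (auto simp: has_derivative_at)
  have "filterlim (\<lambda>n. h n *\<^sub>R j) (at 0) sequentially"
  proof (rule filterlim_atI)
    show "((\<lambda>n. h n *\<^sub>R j) \<longlongrightarrow> 0) sequentially"
      using tendsto_scaleR[OF h0 tendsto_const[of j]] by simp
  qed (use hnz j in simp)
  from filterlim_compose[OF lim this]
  have "(\<lambda>n. norm (f (x + h n *\<^sub>R j) - f x - L (h n *\<^sub>R j)) / norm (h n *\<^sub>R j)) \<longlonglongrightarrow> 0" .
  from tendsto_mult[OF this tendsto_const[of "norm j"]]
  have "(\<lambda>n. norm (f (x + h n *\<^sub>R j) - f x - L (h n *\<^sub>R j)) / norm (h n *\<^sub>R j) * norm j) \<longlonglongrightarrow> 0"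
    by simp
  moreover have "norm ((f (x + h n *\<^sub>R j) - f x) / of_real (h n) - L j) =
      norm (f (x + h n *\<^sub>R j) - f x - L (h n *\<^sub>R j)) / norm (h n *\<^sub>R j) * norm j" for n
  proof -
    have "L (h n *\<^sub>R j) = of_real (h n) * L j"
      using linear_scale[OF bounded_linear.linear[OF bl]] by (simp add: scaleR_conv_of_real)
    then have "(f (x + h n *\<^sub>R j) - f x) / of_real (h n) - L j
        = (f (x + h n *\<^sub>R j) - f x - L (h n *\<^sub>R j)) / of_real (h n)"
      using hnz[of n] by (simp add: field_simps)
    then show ?thesis using hnz[of n] j by (simp add: norm_divide)
  qed
  ultimately have "(\<lambda>n. norm ((f (x + h n *\<^sub>R j) - f x) / of_real (h n) - L j)) \<longlonglongrightarrow> 0"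
    by (simp only:)
  then show ?thesis
    by (simp add: tendsto_norm_zero_iff LIM_zero_iff)
qed

lemma tendsto_cis_difference_quotient:
  fixes h :: "nat \<Rightarrow> real"
  assumes "h \<longlonglongrightarrow> 0" and "\<And>n. h n \<noteq> 0"
  shows "(\<lambda>n. (cis (h n * a) - 1) / of_real (h n)) \<longlonglongrightarrow> \<i> * of_real a"
proof -
  have "((\<lambda>t. cis (t * a)) has_derivative (\<lambda>t. (t * a) *\<^sub>R (\<i> * cis (0 * a)))) (at 0)"
    by (intro has_derivative_cis derivative_intros)
  from tendsto_difference_quotient[OF this _ assms, of 1] show ?thesis
    by (simp add: scaleR_conv_of_real mult.commute)
qed

lemma integral_cis_difference_quotient:
  assumes \<psi>: "\<psi> \<in> test_fun G"
  shows "(\<integral>x. cis (- (\<xi> \<bullet> x)) * ((\<psi> (x + h *\<^sub>R j) - \<psi> x) / of_real h) \<partial>lborel)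
       = (cis (h * (\<xi> \<bullet> j)) - 1) / of_real h * (\<integral>x. cis (- (\<xi> \<bullet> x)) * \<psi> x \<partial>lborel)"
proof -
  have cont: "continuous_on UNIV \<psi>"
    using \<psi> by (intro smooth_fun_continuous_on test_fun_smooth)
  then have meas: "\<psi> \<in> borel_measurable borel"
    by (rule borel_measurable_continuous_onI)
  have int: "integrable lborel (\<lambda>x. cis (- (\<xi> \<bullet> x)) * \<psi> (x + c))" for c
  proof (rule Bochner_Integration.integrable_bound)
    show "integrable lborel (\<lambda>x. \<psi> (x + c))"
      using integrable_lborel_translate_iff[OF meas] test_fun_integrable[OF \<psi>] by blast
    show "(\<lambda>x. cis (- (\<xi> \<bullet> x)) * \<psi> (x + c)) \<in> borel_measurable lborel"
      using cont by (auto intro!: borel_measurable_continuous_onI continuous_intros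
          continuous_on_compose2[OF cont])
  qed (auto simp: norm_mult)
  have "(\<lambda>x. cis (- (\<xi> \<bullet> x)) * ((\<psi> (x + h *\<^sub>R j) - \<psi> x) / of_real h))
      = (\<lambda>x. (cis (- (\<xi> \<bullet> x)) * \<psi> (x + h *\<^sub>R j) - cis (- (\<xi> \<bullet> x)) * \<psi> (x + 0)) / of_real h)"
    by (simp add: right_diff_distrib)
  then show ?thesis
    using int[of "h *\<^sub>R j"] int[of 0] integral_cis_mult_translate[OF meas, of \<xi>]
    by (simp add: integral_diff diff_divide_distrib left_diff_distrib)
qed

lemma difference_quotient_dominated:
  assumes \<psi>: "\<psi> \<in> test_fun G" and j: "norm j = 1"
  obtains w where "integrable lborel w"
    and "\<And>h x. 0 < h \<Longrightarrow> h \<le> 1 \<Longrightarrow> norm ((\<psi> (x + h *\<^sub>R j) - \<psi> x) / of_real h) \<le> w x"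
proof -
  obtain B where B: "\<And>y. onorm (frechet_derivative \<psi> (at y)) \<le> B"
    using test_fun_derivative_bounded[OF \<psi>] by blast
  obtain R where R: "\<And>x. x \<in> tsupp \<psi> \<Longrightarrow> norm x \<le> R"
    using compact_imp_bounded[OF test_fun_compact_tsupp[OF \<psi>]] bounded_iff by metis
  define w where "w x = B * indicator (cball (0::'a) (R + 1)) x" for x
  have "integrable lborel w"
    unfolding w_def by (intro integrable_mult_right integrable_real_indicator emeasure_bounded_finite) auto
  moreover have "norm ((\<psi> (x + h *\<^sub>R j) - \<psi> x) / of_real h) \<le> w x" if h: "0 < h" "h \<le> 1" for h x
  proof (cases "norm x \<le> R + 1")
    case True
    have "norm (\<psi> (x + h *\<^sub>R j) - \<psi> x) \<le> norm (h *\<^sub>R j) * B"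
      using \<psi> B by (intro differentiable_bound_segment[of x "h *\<^sub>R j" UNIV])
        (auto intro: smooth_fun_has_derivative test_fun_smooth)
    then show ?thesis
      using True h j by (simp add: w_def norm_divide pos_divide_le_eq mult.commute)
  next
    case False
    have "norm (x + h *\<^sub>R j) > R"
      using False h j norm_triangle_ineq2[of x "- (h *\<^sub>R j)"] by auto
    then have "x \<notin> tsupp \<psi>" "x + h *\<^sub>R j \<notin> tsupp \<psi>"
      using R False by force+
    then have "\<psi> x = 0" "\<psi> (x + h *\<^sub>R j) = 0"
      by (auto intro: zero_outside_tsupp)
    then show ?thesis using False by (simp add: w_def)
  qed
  ultimately show ?thesis using that by blast
qed

text \<open>A translation by \<open>h j\<close> multiplies the Fourier integral by \<open>cis (h (\<xi> \<bullet> j))\<close>; dominated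
  convergence of the difference quotients then identifies the limit on both sides.\<close>
lemma fourier_partial_deriv:
  assumes \<psi>: "\<psi> \<in> test_fun G" and j: "j \<in> Basis"
  shows "fourier (partial_deriv \<psi> j) \<xi> = \<i> * of_real (\<xi> \<bullet> j) * fourier \<psi> \<xi>"
proof -
  define h :: "nat \<Rightarrow> real" where "h n = inverse (real (Suc n))" for n
  have h0: "h \<longlonglongrightarrow> 0" unfolding h_def by (rule LIMSEQ_inverse_real_of_nat)
  have h: "0 < h n" "h n \<le> 1" for n unfolding h_def by (auto simp: field_simps)
  then have hnz: "h n \<noteq> 0" for n by (metis less_irrefl)
  define Q where "Q n x = cis (- (\<xi> \<bullet> x)) * ((\<psi> (x + h n *\<^sub>R j) - \<psi> x) / of_real (h n))" for n x
  obtain w where w: "integrable lborel w"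
    and bound: "\<And>h x. 0 < h \<Longrightarrow> h \<le> 1 \<Longrightarrow> norm ((\<psi> (x + h *\<^sub>R j) - \<psi> x) / of_real h) \<le> w x"
    using difference_quotient_dominated[OF \<psi> norm_Basis[OF j]] by blast
  have cont: "continuous_on UNIV \<psi>" "continuous_on UNIV (partial_deriv \<psi> j)"
    using \<psi> j by (auto intro: smooth_fun_continuous_on test_fun_smooth test_fun_partial_deriv)
  have "(\<lambda>n. integral\<^sup>L lborel (Q n)) \<longlonglongrightarrow> (\<integral>x. cis (- (\<xi> \<bullet> x)) * partial_deriv \<psi> j x \<partial>lborel)"
  proof (rule integral_dominated_convergence[OF _ _ w])
    show "AE x in lborel. (\<lambda>n. Q n x) \<longlonglongrightarrow> cis (- (\<xi> \<bullet> x)) * partial_deriv \<psi> j x"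
      unfolding Q_def partial_deriv_def using j
      by (intro AE_I2 tendsto_mult tendsto_const tendsto_difference_quotient[OF _ _ h0 hnz]
          smooth_fun_has_derivative test_fun_smooth[OF \<psi>]) auto
    show "AE x in lborel. norm (Q n x) \<le> w x" for n
      by (intro AE_I2) (simp only: Q_def norm_mult norm_cis mult_1_left bound[OF h])
    show "(\<lambda>x. cis (- (\<xi> \<bullet> x)) * partial_deriv \<psi> j x) \<in> borel_measurable lborel"
      using borel_measurable_cis_mult[OF borel_measurable_continuous_onI[OF cont(2)]] by simp
    have shift: "continuous_on UNIV (\<lambda>x. \<psi> (x + h n *\<^sub>R j))" for n
      by (rule continuous_on_compose2[OF cont(1)]) (auto intro: continuous_intros)
    have "(\<lambda>x. (\<psi> (x + h n *\<^sub>R j) - \<psi> x) / of_real (h n)) \<in> borel_measurable borel" for n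
      by (intro borel_measurable_divide borel_measurable_diff borel_measurable_const
          borel_measurable_continuous_onI[OF shift] borel_measurable_continuous_onI[OF cont(1)])
    from borel_measurable_cis_mult[OF this]
    show "Q n \<in> borel_measurable lborel" for n
      unfolding Q_def by simp
  qed
  moreover have "(\<lambda>n. integral\<^sup>L lborel (Q n)) \<longlonglongrightarrow> \<i> * of_real (\<xi> \<bullet> j) * (\<integral>x. cis (- (\<xi> \<bullet> x)) * \<psi> x \<partial>lborel)"
    unfolding Q_def integral_cis_difference_quotient[OF \<psi>]
    by (intro tendsto_mult tendsto_const tendsto_cis_difference_quotient h0 hnz)
  ultimately have "(\<integral>x. cis (- (\<xi> \<bullet> x)) * partial_deriv \<psi> j x \<partial>lborel)
      = \<i> * of_real (\<xi> \<bullet> j) * (\<integral>x. cis (- (\<xi> \<bullet> x)) * \<psi> x \<partial>lborel)"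
    by (rule LIMSEQ_unique)
  then show ?thesis
    unfolding fourier_def by simp
qed

lemma fourier_iterated_partial_deriv:
  assumes "\<psi> \<in> test_fun G" "j \<in> Basis"
  shows "fourier (((\<lambda>g. partial_deriv g j) ^^ m) \<psi>) \<xi> = (\<i> * of_real (\<xi> \<bullet> j)) ^ m * fourier \<psi> \<xi>"
proof (induction m)
  case (Suc m)
  then show ?case
    using fourier_partial_deriv[OF test_fun_iterated_partial_deriv[OF assms, of m] assms(2), of \<xi>]
    by simp
qed simp

lemma norm_fourier_le:
  fixes f :: "'a::euclidean_space \<Rightarrow> complex"
  shows "norm (fourier f \<xi>) \<le> (2 * pi) powr (- real DIM('a) / 2) * (\<integral>x. norm (f x) \<partial>lborel)"
proof -
  have "norm (\<integral>x. cis (- (\<xi> \<bullet> x)) * f x \<partial>lborel) \<le> (\<integral>x. norm (cis (- (\<xi> \<bullet> x)) * f x) \<partial>lborel)"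
    by (rule integral_norm_bound)
  then show ?thesis
    unfolding fourier_def by (simp add: norm_mult)
qed

lemma fourier_coordinate_decay:
  assumes "\<phi> \<in> test_fun G" and "b \<in> Basis"
  obtains K where "\<And>\<xi>. \<bar>\<xi> \<bullet> b\<bar> ^ n * norm (fourier \<phi> \<xi>) \<le> K"
proof -
  have "\<bar>\<xi> \<bullet> b\<bar> ^ n * norm (fourier \<phi> \<xi>)
      \<le> (2 * pi) powr (- real DIM('a) / 2) * (\<integral>x. norm (((\<lambda>g. partial_deriv g b) ^^ n) \<phi> x) \<partial>lborel)"
    for \<xi> :: 'a
    using norm_fourier_le[of "((\<lambda>g. partial_deriv g b) ^^ n) \<phi>" \<xi>]
    by (simp add: fourier_iterated_partial_deriv[OF assms] norm_mult norm_power)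
  then show ?thesis using that by blast
qed

lemma exists_Basis_coordinate_ge:
  fixes \<xi> :: "'a::euclidean_space"
  shows "\<exists>b\<in>Basis. norm \<xi> \<le> real DIM('a) * \<bar>\<xi> \<bullet> b\<bar>"
proof (rule ccontr)
  assume "\<not> ?thesis"
  then have "\<bar>\<xi> \<bullet> b\<bar> < norm \<xi> / real DIM('a)" if "b \<in> Basis" for b
    using that by (auto simp: field_simps)
  then have "(\<Sum>b\<in>Basis. \<bar>\<xi> \<bullet> b\<bar>) < (\<Sum>b\<in>(Basis::'a set). norm \<xi> / real DIM('a))"
    by (intro sum_strict_mono) auto
  with norm_le_l1[of \<xi>] show False by simp
qed

lemma one_plus_norm_sq_power_le:
  fixes \<xi> :: "'a::euclidean_space"
  shows "(1 + (norm \<xi>)\<^sup>2) ^ m \<le> 2 ^ m + (2 * (real DIM('a))\<^sup>2) ^ m * (\<Sum>b\<in>Basis. \<bar>\<xi> \<bullet> b\<bar> ^ (2 * m))"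
proof -
  define d where "d = real DIM('a)"
  have nonneg: "0 \<le> (2 * d\<^sup>2) ^ m * (\<Sum>b\<in>Basis. \<bar>\<xi> \<bullet> b\<bar> ^ (2 * m))"
    by (simp add: sum_nonneg)
  show ?thesis
  proof (cases "norm \<xi> \<le> 1")
    case True
    then have "(1 + (norm \<xi>)\<^sup>2) ^ m \<le> 2 ^ m"
      by (intro power_mono) (auto simp: power_le_one)
    then show ?thesis using nonneg unfolding d_def by linarith
  next
    case False
    obtain b where b: "b \<in> Basis" and "norm \<xi> \<le> d * \<bar>\<xi> \<bullet> b\<bar>"
      using exists_Basis_coordinate_ge[of \<xi>] unfolding d_def by blast
    then have "(norm \<xi>)\<^sup>2 \<le> d\<^sup>2 * \<bar>\<xi> \<bullet> b\<bar>\<^sup>2"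
      by (metis norm_ge_zero power_mono power_mult_distrib)
    moreover have "1 \<le> (norm \<xi>)\<^sup>2" using False by (simp add: one_le_power)
    ultimately have "(1 + (norm \<xi>)\<^sup>2) ^ m \<le> (2 * d\<^sup>2 * \<bar>\<xi> \<bullet> b\<bar>\<^sup>2) ^ m"
      by (intro power_mono) auto
    also have "\<dots> = (2 * d\<^sup>2) ^ m * \<bar>\<xi> \<bullet> b\<bar> ^ (2 * m)"
      by (simp add: power_mult_distrib power_mult)
    also have "\<dots> \<le> (2 * d\<^sup>2) ^ m * (\<Sum>b\<in>Basis. \<bar>\<xi> \<bullet> b\<bar> ^ (2 * m))"
      using b by (intro mult_left_mono member_le_sum) auto
    finally have "(1 + (norm \<xi>)\<^sup>2) ^ m \<le> (2 * d\<^sup>2) ^ m * (\<Sum>b\<in>Basis. \<bar>\<xi> \<bullet> b\<bar> ^ (2 * m))" .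
    moreover have "0 \<le> (2::real) ^ m" by simp
    ultimately show ?thesis unfolding d_def by linarith
  qed
qed

lemma fourier_rapid_decay:
  assumes \<phi>: "\<phi> \<in> test_fun G"
  obtains B where "\<And>\<xi>. (1 + (norm \<xi>)\<^sup>2) ^ m * norm (fourier \<phi> \<xi>) \<le> B"
proof -
  define c where "c = (2 * (real DIM('a))\<^sup>2) ^ m"
  obtain b0 :: 'a where b0: "b0 \<in> Basis" using nonempty_Basis by blast
  obtain K0 where K0: "\<And>\<xi>. norm (fourier \<phi> \<xi>) \<le> K0"
    using fourier_coordinate_decay[OF \<phi> b0, of 0] by auto
  have "\<exists>K. \<forall>\<xi>. \<bar>\<xi> \<bullet> b\<bar> ^ (2 * m) * norm (fourier \<phi> \<xi>) \<le> K" if "b \<in> Basis" for b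
    using fourier_coordinate_decay[OF \<phi> that] by blast
  then obtain K where K: "\<And>b \<xi>. b \<in> Basis \<Longrightarrow> \<bar>\<xi> \<bullet> b\<bar> ^ (2 * m) * norm (fourier \<phi> \<xi>) \<le> K b"
    by metis
  have "(1 + (norm \<xi>)\<^sup>2) ^ m * norm (fourier \<phi> \<xi>) \<le> 2 ^ m * K0 + c * (\<Sum>b\<in>Basis. K b)" for \<xi> :: 'a
  proof -
    have "(1 + (norm \<xi>)\<^sup>2) ^ m * norm (fourier \<phi> \<xi>)
        \<le> (2 ^ m + c * (\<Sum>b\<in>Basis. \<bar>\<xi> \<bullet> b\<bar> ^ (2 * m))) * norm (fourier \<phi> \<xi>)"
      unfolding c_def by (intro mult_right_mono one_plus_norm_sq_power_le norm_ge_zero)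
    also have "\<dots> = 2 ^ m * norm (fourier \<phi> \<xi>) + c * (\<Sum>b\<in>Basis. \<bar>\<xi> \<bullet> b\<bar> ^ (2 * m) * norm (fourier \<phi> \<xi>))"
      by (simp only: distrib_right sum_distrib_right mult.assoc)
    also have "\<dots> \<le> 2 ^ m * K0 + c * (\<Sum>b\<in>Basis. K b)"
      using K0 K unfolding c_def by (intro add_mono mult_left_mono sum_mono) auto
    finally show ?thesis .
  qed
  then show ?thesis using that by blast
qed

lemma integrable_prod_inverse_one_plus_square:
  "integrable lborel (\<lambda>\<xi>::'a::euclidean_space. \<Prod>b\<in>Basis. inverse (1 + (\<xi> \<bullet> b)\<^sup>2))"
proof (rule integrableI_nonneg)
  show "(\<lambda>\<xi>::'a. \<Prod>b\<in>Basis. inverse (1 + (\<xi> \<bullet> b)\<^sup>2)) \<in> borel_measurable lborel"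
    by (simp add: borel_measurable_continuous_onI continuous_intros add_nonneg_eq_0_iff)
  show "AE x in lborel. 0 \<le> (\<Prod>b\<in>Basis. inverse (1 + (x \<bullet> b)\<^sup>2))"
    by (intro AE_I2 prod_nonneg) auto
  define I :: real where "I = (\<integral>t. inverse (1 + t\<^sup>2) \<partial>lborel)"
  have "integrable lborel (\<lambda>t::real. inverse (1 + t\<^sup>2))"
    using integrable_inverse_1_plus_square by (simp add: set_integrable_def)
  then have I: "(\<integral>\<^sup>+t. ennreal (inverse (1 + t\<^sup>2)) \<partial>lborel) = ennreal I"
    unfolding I_def by (intro nn_integral_eq_integral) auto
  have "(\<integral>\<^sup>+x. ennreal (\<Prod>b\<in>Basis. inverse (1 + (x \<bullet> b)\<^sup>2)) \<partial>(lborel::'a measure))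
      = (\<integral>\<^sup>+x. (\<Prod>b\<in>Basis. ennreal (inverse (1 + ((x::'a) \<bullet> b)\<^sup>2))) \<partial>lborel)"
    by (intro nn_integral_cong prod_ennreal[symmetric]) simp
  also have "\<dots> = (\<Prod>b\<in>(Basis::'a set). \<integral>\<^sup>+t. ennreal (inverse (1 + t\<^sup>2)) \<partial>lborel)"
    by (rule nn_integral_lborel_prod)
      (auto simp: borel_measurable_continuous_onI continuous_intros add_nonneg_eq_0_iff)
  also have "\<dots> = ennreal (\<Prod>b\<in>(Basis::'a set). I)"
    unfolding I by (rule prod_ennreal) (simp add: I_def integral_nonneg_AE)
  finally show "(\<integral>\<^sup>+x. ennreal (\<Prod>b\<in>Basis. inverse (1 + (x \<bullet> b)\<^sup>2)) \<partial>(lborel::'a measure)) < \<infinity>"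
    by simp
qed

lemma one_plus_norm_sq_powr_neg_DIM_le:
  fixes \<xi> :: "'a::euclidean_space"
  shows "(1 + (norm \<xi>)\<^sup>2) powr (- real DIM('a)) \<le> (\<Prod>b\<in>Basis. inverse (1 + (\<xi> \<bullet> b)\<^sup>2))"
proof -
  define u where "u = 1 + (norm \<xi>)\<^sup>2"
  have u1: "u \<ge> 1" unfolding u_def by simp
  have "(\<Prod>b\<in>Basis. 1 + (\<xi> \<bullet> b)\<^sup>2) \<le> (\<Prod>b\<in>(Basis::'a set). u)"
  proof (rule prod_mono)
    fix b :: 'a assume "b \<in> Basis"
    then have "(\<xi> \<bullet> b)\<^sup>2 \<le> (norm \<xi>)\<^sup>2"
      by (metis Basis_le_norm abs_ge_zero power2_abs power_mono)
    then show "0 \<le> 1 + (\<xi> \<bullet> b)\<^sup>2 \<and> 1 + (\<xi> \<bullet> b)\<^sup>2 \<le> u" unfolding u_def by simp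
  qed
  moreover have "0 < (\<Prod>b\<in>(Basis::'a set). 1 + (\<xi> \<bullet> b)\<^sup>2)"
    by (intro prod_pos) (auto simp: add_pos_nonneg)
  ultimately have "inverse (u ^ DIM('a)) \<le> inverse (\<Prod>b\<in>Basis. 1 + (\<xi> \<bullet> b)\<^sup>2)"
    by (intro le_imp_inverse_le) auto
  moreover have "u powr (- real DIM('a)) = inverse (u ^ DIM('a))"
    using u1 by (simp add: powr_minus powr_realpow)
  ultimately show ?thesis
    unfolding u_def using prod_inversef[of "\<lambda>b. 1 + (\<xi> \<bullet> b)\<^sup>2" Basis] by (simp add: o_def)
qed

lemma fourier_borel_measurable:
  fixes f :: "'a::euclidean_space \<Rightarrow> complex"
  assumes "continuous_on UNIV f"
  shows "fourier f \<in> borel_measurable lborel"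
proof -
  have "continuous_on UNIV (\<lambda>p::'a \<times> 'a. cis (- (fst p \<bullet> snd p)) * f (snd p))"
    by (intro continuous_intros continuous_on_compose2[OF assms]) auto
  then have "(\<lambda>p::'a \<times> 'a. cis (- (fst p \<bullet> snd p)) * f (snd p)) \<in> borel_measurable (lborel \<Otimes>\<^sub>M lborel)"
    unfolding lborel_prod by (simp add: borel_measurable_continuous_onI)
  then have "(\<lambda>\<xi>. \<integral>x. cis (- (\<xi> \<bullet> x)) * f x \<partial>lborel) \<in> borel_measurable lborel"
    by (intro lborel.borel_measurable_lebesgue_integral) (simp add: case_prod_beta)
  then show ?thesis unfolding fourier_def by (intro borel_measurable_times) auto
qed

lemma fourier_test_fun_borel_measurable: "\<phi> \<in> test_fun G \<Longrightarrow> fourier \<phi> \<in> borel_measurable lborel"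
  by (intro fourier_borel_measurable smooth_fun_continuous_on test_fun_smooth)

lemma integrable_weighted_fourier:
  assumes \<phi>: "\<phi> \<in> test_fun G"
  shows "integrable lborel (\<lambda>\<xi>. (1 + (norm \<xi>)\<^sup>2) powr p * (cmod (fourier \<phi> \<xi>))\<^sup>2)"
proof -
  define d where "d = real DIM('a)"
  obtain m :: nat where m: "(p + d) / 2 \<le> real m" using real_arch_simple by blast
  obtain B where B: "\<And>\<xi>. (1 + (norm \<xi>)\<^sup>2) ^ m * norm (fourier \<phi> \<xi>) \<le> B"
    using fourier_rapid_decay[OF \<phi>] by blast
  have bound: "(1 + (norm \<xi>)\<^sup>2) powr p * (cmod (fourier \<phi> \<xi>))\<^sup>2 \<le> B\<^sup>2 * (\<Prod>b\<in>Basis. inverse (1 + (\<xi> \<bullet> b)\<^sup>2))"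
    for \<xi> :: 'a
  proof -
    define u where "u = 1 + (norm \<xi>)\<^sup>2"
    have u1: "u \<ge> 1" unfolding u_def by simp
    then have "0 < u ^ m" by simp
    then have "norm (fourier \<phi> \<xi>) \<le> B / u ^ m"
      using B[of \<xi>] unfolding u_def by (simp add: field_simps)
    then have "(cmod (fourier \<phi> \<xi>))\<^sup>2 \<le> (B / u ^ m)\<^sup>2"
      by (intro power_mono) auto
    also have "\<dots> = B\<^sup>2 / u powr (2 * real m)"
      using powr_realpow[of u "m * 2"] u1 by (simp add: power_divide power_mult mult.commute)
    finally have "u powr p * (cmod (fourier \<phi> \<xi>))\<^sup>2 \<le> u powr p * (B\<^sup>2 / u powr (2 * real m))"
      by (intro mult_left_mono) auto
    also have "\<dots> = B\<^sup>2 * u powr (p - 2 * real m)"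
      using u1 by (simp add: powr_diff)
    also have "\<dots> \<le> B\<^sup>2 * u powr (- d)"
      using u1 m by (intro mult_left_mono powr_mono) auto
    also have "\<dots> \<le> B\<^sup>2 * (\<Prod>b\<in>Basis. inverse (1 + (\<xi> \<bullet> b)\<^sup>2))"
      using one_plus_norm_sq_powr_neg_DIM_le[of \<xi>] unfolding u_def d_def by (intro mult_left_mono) auto
    finally show ?thesis unfolding u_def .
  qed
  show ?thesis
  proof (rule Bochner_Integration.integrable_bound)
    show "integrable lborel (\<lambda>\<xi>::'a. B\<^sup>2 * (\<Prod>b\<in>Basis. inverse (1 + (\<xi> \<bullet> b)\<^sup>2)))"
      by (intro integrable_mult_right integrable_prod_inverse_one_plus_square)
    show "(\<lambda>\<xi>. (1 + (norm \<xi>)\<^sup>2) powr p * (cmod (fourier \<phi> \<xi>))\<^sup>2) \<in> borel_measurable lborel"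
      using fourier_test_fun_borel_measurable[OF \<phi>] by measurable
    show "AE \<xi> in lborel. norm ((1 + (norm \<xi>)\<^sup>2) powr p * (cmod (fourier \<phi> \<xi>))\<^sup>2)
        \<le> norm (B\<^sup>2 * (\<Prod>b\<in>Basis. inverse (1 + (\<xi> \<bullet> b)\<^sup>2)))"
      using bound by (intro AE_I2) (simp add: prod_nonneg)
  qed
qed

lemma integrable_norm_fourier_sq:
  assumes "\<phi> \<in> test_fun G"
  shows "integrable lborel (\<lambda>\<xi>. (cmod (fourier \<phi> \<xi>))\<^sup>2)"
  using integrable_weighted_fourier[OF assms, of 0] by (simp add: add_nonneg_eq_0_iff)

lemma sob_weight_pos: "0 < k \<Longrightarrow> 0 < sob_weight k \<sigma> \<xi>"
  unfolding sob_weight_def by (simp add: add_pos_nonneg)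

lemma sob_weight_borel_measurable: "sob_weight k \<sigma> \<in> borel_measurable lborel"
  unfolding sob_weight_def by measurable

lemma sob_weight_mult_uminus: "0 < k \<Longrightarrow> sob_weight k \<sigma> \<xi> * sob_weight k (- \<sigma>) \<xi> = 1"
  unfolding sob_weight_def by (simp add: add_pos_nonneg powr_add[symmetric])

lemma sob_weight_diff_one:
  "0 < k \<Longrightarrow> sob_weight k (\<sigma> - 1) \<xi> * (k\<^sup>2 + (norm \<xi>)\<^sup>2) = sob_weight k \<sigma> \<xi>"
  unfolding sob_weight_def by (simp add: add_pos_nonneg powr_diff)

lemma sob_weight_eq_scaled:
  assumes "0 < k"
  shows "sob_weight k \<sigma> \<xi> = k powr (2 * \<sigma>) * (1 + (norm \<xi>)\<^sup>2 / k\<^sup>2) powr \<sigma>"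
proof -
  have "k\<^sup>2 + (norm \<xi>)\<^sup>2 = k\<^sup>2 * (1 + (norm \<xi>)\<^sup>2 / k\<^sup>2)"
    using assms by (simp add: field_simps)
  moreover have "k\<^sup>2 = k powr 2"
    using assms by (simp add: powr_realpow)
  then have "(k\<^sup>2) powr \<sigma> = k powr (2 * \<sigma>)"
    by (simp add: powr_powr)
  ultimately show ?thesis
    unfolding sob_weight_def by (simp add: powr_mult)
qed

lemma one_plus_div_square_powr_le:
  fixes t k :: real
  assumes t: "0 \<le> t" and k: "1 \<le> k"
  shows "(1 + t / k\<^sup>2) powr \<sigma> \<le> (1 + t) powr \<bar>\<sigma>\<bar>"
proof (cases "0 \<le> \<sigma>")
  case True
  have "1 \<le> k\<^sup>2" using k by (simp add: one_le_power)
  then have "t / k\<^sup>2 \<le> t / 1"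
    using t by (intro divide_left_mono) auto
  then show ?thesis using True t by (simp add: powr_mono2)
next
  case False
  have "0 < 1 + t / k\<^sup>2" using t by (simp add: add_pos_nonneg)
  then have "(1 + t / k\<^sup>2) powr \<sigma> \<le> 1"
    using False t powr_mono[of \<sigma> 0 "1 + t / k\<^sup>2"] by simp
  also have "1 \<le> (1 + t) powr \<bar>\<sigma>\<bar>"
    using t by (simp add: ge_one_powr_ge_zero)
  finally show ?thesis .
qed

lemma in_sob_ft_fourier:
  assumes \<phi>: "\<phi> \<in> test_fun G" and k: "1 \<le> k"
  shows "in_sob_ft k \<sigma> (fourier \<phi>)"
  unfolding in_sob_ft_def
proof (intro conjI fourier_test_fun_borel_measurable[OF \<phi>])
  show "integrable lborel (\<lambda>\<xi>. sob_weight k \<sigma> \<xi> * (cmod (fourier \<phi> \<xi>))\<^sup>2)"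
  proof (rule Bochner_Integration.integrable_bound)
  show "integrable lborel (\<lambda>\<xi>. k powr (2 * \<sigma>) * ((1 + (norm \<xi>)\<^sup>2) powr \<bar>\<sigma>\<bar> * (cmod (fourier \<phi> \<xi>))\<^sup>2))"
    by (intro integrable_mult_right integrable_weighted_fourier[OF \<phi>])
  show "(\<lambda>\<xi>. sob_weight k \<sigma> \<xi> * (cmod (fourier \<phi> \<xi>))\<^sup>2) \<in> borel_measurable lborel"
    using sob_weight_borel_measurable fourier_test_fun_borel_measurable[OF \<phi>] by measurable
  have "sob_weight k \<sigma> \<xi> * (cmod (fourier \<phi> \<xi>))\<^sup>2
      \<le> k powr (2 * \<sigma>) * ((1 + (norm \<xi>)\<^sup>2) powr \<bar>\<sigma>\<bar> * (cmod (fourier \<phi> \<xi>))\<^sup>2)" for \<xi>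
    using k one_plus_div_square_powr_le[of "(norm \<xi>)\<^sup>2" k \<sigma>]
    by (simp add: sob_weight_eq_scaled mult.assoc mult_left_mono mult_right_mono)
  then show "AE \<xi> in lborel. norm (sob_weight k \<sigma> \<xi> * (cmod (fourier \<phi> \<xi>))\<^sup>2)
      \<le> norm (k powr (2 * \<sigma>) * ((1 + (norm \<xi>)\<^sup>2) powr \<bar>\<sigma>\<bar> * (cmod (fourier \<phi> \<xi>))\<^sup>2))"
    by (intro AE_I2) (simp add: sob_weight_def)
  qed
qed

lemma Zsym_borel_measurable: "Zsym k \<in> borel_measurable lborel"
  unfolding Zsym_def by measurable

lemma Re_Zsym: "Re (Zsym k \<xi>) = (if norm \<xi> \<le> k then sqrt (k\<^sup>2 - (norm \<xi>)\<^sup>2) else 0)"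
  by (simp add: Zsym_def)

lemma norm_Zsym_sq_le: "0 \<le> k \<Longrightarrow> (cmod (Zsym k \<xi>))\<^sup>2 \<le> k\<^sup>2 + (norm \<xi>)\<^sup>2"
  by (cases "norm \<xi> \<le> k") (auto simp: Zsym_def norm_mult intro: power_mono)

lemma in_sob_ft_Tk_ft:
  assumes k: "0 < k" and \<phi>: "in_sob_ft k \<sigma> (fourier \<phi>)"
  shows "in_sob_ft k (\<sigma> - 1) (Tk_ft k \<phi>)"
  unfolding in_sob_ft_def
proof
  show meas: "Tk_ft k \<phi> \<in> borel_measurable lborel"
  proof -
    have "fourier \<phi> \<in> borel_measurable lborel"
      using \<phi> unfolding in_sob_ft_def by blast
    then show ?thesis
      using Zsym_borel_measurable unfolding Tk_ft_def[abs_def] by measurable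
  qed
  show "integrable lborel (\<lambda>\<xi>. sob_weight k (\<sigma> - 1) \<xi> * (cmod (Tk_ft k \<phi> \<xi>))\<^sup>2)"
  proof (rule Bochner_Integration.integrable_bound)
  show "integrable lborel (\<lambda>\<xi>. sob_weight k \<sigma> \<xi> * (cmod (fourier \<phi> \<xi>))\<^sup>2)"
    using \<phi> unfolding in_sob_ft_def by blast
  show "(\<lambda>\<xi>. sob_weight k (\<sigma> - 1) \<xi> * (cmod (Tk_ft k \<phi> \<xi>))\<^sup>2) \<in> borel_measurable lborel"
    using sob_weight_borel_measurable meas by measurable
  have "sob_weight k (\<sigma> - 1) \<xi> * (cmod (Tk_ft k \<phi> \<xi>))\<^sup>2 \<le> sob_weight k \<sigma> \<xi> * (cmod (fourier \<phi> \<xi>))\<^sup>2"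
    for \<xi>
  proof -
    have "(cmod (Tk_ft k \<phi> \<xi>))\<^sup>2 = (cmod (Zsym k \<xi>))\<^sup>2 * (cmod (fourier \<phi> \<xi>))\<^sup>2 / 4"
      by (simp add: Tk_ft_def norm_mult power_mult_distrib power_divide)
    also have "\<dots> \<le> (cmod (Zsym k \<xi>))\<^sup>2 * (cmod (fourier \<phi> \<xi>))\<^sup>2"
      by simp
    also have "\<dots> \<le> (k\<^sup>2 + (norm \<xi>)\<^sup>2) * (cmod (fourier \<phi> \<xi>))\<^sup>2"
      using norm_Zsym_sq_le[of k \<xi>] k by (intro mult_right_mono) auto
    finally have "sob_weight k (\<sigma> - 1) \<xi> * (cmod (Tk_ft k \<phi> \<xi>))\<^sup>2
        \<le> sob_weight k (\<sigma> - 1) \<xi> * ((k\<^sup>2 + (norm \<xi>)\<^sup>2) * (cmod (fourier \<phi> \<xi>))\<^sup>2)"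
      using sob_weight_pos[OF k, of "\<sigma> - 1" \<xi>] by (intro mult_left_mono) auto
    then show ?thesis
      by (simp only: sob_weight_diff_one[OF k] mult.assoc[symmetric])
  qed
  then show "AE \<xi> in lborel. norm (sob_weight k (\<sigma> - 1) \<xi> * (cmod (Tk_ft k \<phi> \<xi>))\<^sup>2)
      \<le> norm (sob_weight k \<sigma> \<xi> * (cmod (fourier \<phi> \<xi>))\<^sup>2)"
    by (intro AE_I2) (simp add: sob_weight_def)
  qed
qed

lemma sob_norm_ft_eq_0: "AE \<xi> in lborel. U \<xi> = 0 \<Longrightarrow> sob_norm_ft k \<sigma> U = 0"
  unfolding sob_norm_ft_def by (subst integral_eq_zero_AE) (auto elim: AE_mp)

section \<open>Behaviour as \<open>k \<rightarrow> \<infinity>\<close>\<close>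

lemma tendsto_integral_mult_at_top:
  fixes f :: "real \<Rightarrow> 'a::euclidean_space \<Rightarrow> real"
  assumes f: "\<And>k. f k \<in> borel_measurable lborel" and g: "g \<in> borel_measurable lborel"
    and w: "integrable lborel (\<lambda>\<xi>. w \<xi> * g \<xi>)" and g_nonneg: "\<And>\<xi>. 0 \<le> g \<xi>"
    and lim: "\<And>\<xi>. ((\<lambda>k. f k \<xi>) \<longlongrightarrow> 1) at_top"
    and bound: "\<forall>\<^sub>F k in at_top. \<forall>\<xi>. \<bar>f k \<xi>\<bar> \<le> w \<xi>"
  shows "((\<lambda>k. \<integral>\<xi>. f k \<xi> * g \<xi> \<partial>lborel) \<longlongrightarrow> integral\<^sup>L lborel g) at_top"
proof (rule integral_dominated_convergence_at_top[OF g _ w])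
  show "(\<lambda>\<xi>. f k \<xi> * g \<xi>) \<in> borel_measurable lborel" for k
    using f g by (rule borel_measurable_times)
  show "AE \<xi> in lborel. ((\<lambda>k. f k \<xi> * g \<xi>) \<longlongrightarrow> g \<xi>) at_top"
    using tendsto_mult[OF lim tendsto_const] by (intro AE_I2) simp
  show "\<forall>\<^sub>F k in at_top. AE \<xi> in lborel. norm (f k \<xi> * g \<xi>) \<le> w \<xi> * g \<xi>"
    using bound by eventually_elim (auto simp: abs_mult g_nonneg intro!: mult_right_mono)
qed

lemma tendsto_one_plus_div_square_at_top: "((\<lambda>k::real. 1 + c / k\<^sup>2) \<longlongrightarrow> 1) at_top"
proof -
  have "filterlim (\<lambda>k::real. k\<^sup>2) at_top at_top"
    by (intro filterlim_pow_at_top filterlim_ident) auto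
  from tendsto_add[OF tendsto_const
      tendsto_divide_0[OF tendsto_const filterlim_at_top_imp_at_infinity[OF this]]]
  show ?thesis by simp
qed

lemma tendsto_sob_norm_ft_fourier:
  assumes \<phi>: "\<phi> \<in> test_fun G"
  shows "((\<lambda>k. sob_norm_ft k \<sigma> (fourier \<phi>) / k powr \<sigma>)
           \<longlongrightarrow> sqrt (\<integral>\<xi>. (cmod (fourier \<phi> \<xi>))\<^sup>2 \<partial>lborel)) at_top"
proof -
  have "((\<lambda>k. \<integral>\<xi>. (1 + (norm \<xi>)\<^sup>2 / k\<^sup>2) powr \<sigma> * (cmod (fourier \<phi> \<xi>))\<^sup>2 \<partial>lborel)
      \<longlongrightarrow> (\<integral>\<xi>. (cmod (fourier \<phi> \<xi>))\<^sup>2 \<partial>lborel)) at_top"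
  proof (rule tendsto_integral_mult_at_top[where w = "\<lambda>\<xi>. (1 + (norm \<xi>)\<^sup>2) powr \<bar>\<sigma>\<bar>"])
    show "((\<lambda>k. (1 + (norm \<xi>)\<^sup>2 / k\<^sup>2) powr \<sigma>) \<longlongrightarrow> 1) at_top" for \<xi> :: 'a
      using tendsto_powr[OF tendsto_one_plus_div_square_at_top tendsto_const] by simp
    show "\<forall>\<^sub>F k in at_top. \<forall>\<xi>. \<bar>(1 + (norm \<xi>)\<^sup>2 / k\<^sup>2) powr \<sigma>\<bar> \<le> (1 + (norm (\<xi>::'a))\<^sup>2) powr \<bar>\<sigma>\<bar>"
      using eventually_ge_at_top[of "1::real"]
      by eventually_elim (simp add: one_plus_div_square_powr_le)
  qed (use fourier_test_fun_borel_measurable[OF \<phi>] integrable_weighted_fourier[OF \<phi>] in auto)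
  then have "((\<lambda>k. sqrt (\<integral>\<xi>. (1 + (norm \<xi>)\<^sup>2 / k\<^sup>2) powr \<sigma> * (cmod (fourier \<phi> \<xi>))\<^sup>2 \<partial>lborel))
      \<longlongrightarrow> sqrt (\<integral>\<xi>. (cmod (fourier \<phi> \<xi>))\<^sup>2 \<partial>lborel)) at_top"
    by (rule tendsto_real_sqrt)
  moreover have "\<forall>\<^sub>F k in at_top.
      sqrt (\<integral>\<xi>. (1 + (norm \<xi>)\<^sup>2 / k\<^sup>2) powr \<sigma> * (cmod (fourier \<phi> \<xi>))\<^sup>2 \<partial>lborel)
      = sob_norm_ft k \<sigma> (fourier \<phi>) / k powr \<sigma>"
    using eventually_gt_at_top[of "0::real"]
  proof eventually_elim
    case (elim k)
    have "k powr (2 * \<sigma>) = (k powr \<sigma>)\<^sup>2"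
      by (simp add: power2_eq_square powr_add[symmetric])
    then show ?case
      using elim unfolding sob_norm_ft_def
      by (simp add: sob_weight_eq_scaled mult.assoc real_sqrt_mult)
  qed
  ultimately show ?thesis
    by (rule Lim_transform_eventually)
qed

lemma Im_Tk_ft_mult_cnj:
  "Im (Tk_ft k \<phi> \<xi> * cnj (fourier \<phi> \<xi>)) = Re (Zsym k \<xi>) * (cmod (fourier \<phi> \<xi>))\<^sup>2 / 2"
proof -
  have eq: "Tk_ft k \<phi> \<xi> * cnj (fourier \<phi> \<xi>) = \<i> / 2 * Zsym k \<xi> * of_real ((cmod (fourier \<phi> \<xi>))\<^sup>2)"
    unfolding Tk_ft_def using complex_norm_square[of "fourier \<phi> \<xi>"] by (simp only: mult.assoc)
  show ?thesis
    unfolding eq by (cases "norm \<xi> \<le> k") (simp_all add: Zsym_def)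
qed

lemma tendsto_Re_Zsym_div: "((\<lambda>k. Re (Zsym k \<xi>) / k) \<longlongrightarrow> 1) at_top"
proof -
  have "((\<lambda>k. sqrt (1 - (norm \<xi>)\<^sup>2 / k\<^sup>2)) \<longlongrightarrow> 1) at_top"
    using tendsto_real_sqrt[OF tendsto_one_plus_div_square_at_top[of "- (norm \<xi>)\<^sup>2"]] by simp
  moreover have "\<forall>\<^sub>F k in at_top. sqrt (1 - (norm \<xi>)\<^sup>2 / k\<^sup>2) = Re (Zsym k \<xi>) / k"
    using eventually_ge_at_top[of "max 1 (norm \<xi>)"]
  proof eventually_elim
    case (elim k)
    then have "1 - (norm \<xi>)\<^sup>2 / k\<^sup>2 = (k\<^sup>2 - (norm \<xi>)\<^sup>2) / k\<^sup>2"
      by (simp add: field_simps)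
    then show ?case
      using elim by (simp add: Re_Zsym real_sqrt_divide)
  qed
  ultimately show ?thesis
    by (rule Lim_transform_eventually)
qed

lemma abs_Re_Zsym_div_le:
  assumes "0 < k"
  shows "\<bar>Re (Zsym k \<xi>) / k\<bar> \<le> 1"
proof -
  have "sqrt (k\<^sup>2 - (norm \<xi>)\<^sup>2) \<le> sqrt (k\<^sup>2)"
    by (rule real_sqrt_le_mono) simp
  then have "0 \<le> Re (Zsym k \<xi>) \<and> Re (Zsym k \<xi>) \<le> k"
    using assms by (simp add: Re_Zsym)
  then show ?thesis
    using assms by (simp add: abs_le_iff divide_le_eq)
qed

text \<open>Only the propagating frequencies |xi| <= k contribute to the imaginary part, with weight
  sqrt(k^2 - |xi|^2) / 2, which is asymptotic to k / 2.\<close>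
lemma tendsto_Im_Tk_pairing:
  assumes \<phi>: "\<phi> \<in> test_fun G"
  shows "((\<lambda>k. (\<integral>\<xi>. Im (Tk_ft k \<phi> \<xi> * cnj (fourier \<phi> \<xi>)) \<partial>lborel) / k)
           \<longlongrightarrow> (\<integral>\<xi>. (cmod (fourier \<phi> \<xi>))\<^sup>2 \<partial>lborel) / 2) at_top"
proof -
  have "((\<lambda>k. \<integral>\<xi>. Re (Zsym k \<xi>) / k * ((cmod (fourier \<phi> \<xi>))\<^sup>2 / 2) \<partial>lborel)
      \<longlongrightarrow> (\<integral>\<xi>. (cmod (fourier \<phi> \<xi>))\<^sup>2 / 2 \<partial>lborel)) at_top"
  proof (rule tendsto_integral_mult_at_top[where w = "\<lambda>_. 1"])
    show "((\<lambda>k. Re (Zsym k \<xi>) / k) \<longlongrightarrow> 1) at_top" for \<xi> :: 'a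
      by (rule tendsto_Re_Zsym_div)
    show "\<forall>\<^sub>F k in at_top. \<forall>\<xi>::'a. \<bar>Re (Zsym k \<xi>) / k\<bar> \<le> 1"
      using eventually_gt_at_top[of "0::real"] by eventually_elim (blast intro: abs_Re_Zsym_div_le)
    show "(\<lambda>\<xi>. Re (Zsym k \<xi>) / k) \<in> borel_measurable lborel" for k
      using Zsym_borel_measurable[of k] by measurable
  qed (use fourier_test_fun_borel_measurable[OF \<phi>] integrable_norm_fourier_sq[OF \<phi>] in auto)
  moreover have "(\<integral>\<xi>. Re (Zsym k \<xi>) / k * ((cmod (fourier \<phi> \<xi>))\<^sup>2 / 2) \<partial>lborel)
      = (\<integral>\<xi>. Im (Tk_ft k \<phi> \<xi> * cnj (fourier \<phi> \<xi>)) \<partial>lborel) / k" for k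
  proof -
    have "Re (Zsym k \<xi>) / k * ((cmod (fourier \<phi> \<xi>))\<^sup>2 / 2) = Im (Tk_ft k \<phi> \<xi> * cnj (fourier \<phi> \<xi>)) / k"
      for \<xi>
      by (simp only: Im_Tk_ft_mult_cnj) (simp add: field_simps)
    then show ?thesis
      by (simp only: integral_divide_zero)
  qed
  ultimately show ?thesis by simp
qed

section \<open>Duality\<close>

lemma le_sqrt_mult_if_le_scaled_mean:
  fixes A B X :: real
  assumes A: "0 \<le> A" and B: "0 \<le> B" and H: "\<And>t. 0 < t \<Longrightarrow> X \<le> (t * A + B / t) / 2"
  shows "X \<le> sqrt A * sqrt B"
proof (cases "0 < A \<and> 0 < B")
  case True
  then have "sqrt B / sqrt A * A = sqrt A * sqrt B" "B / (sqrt B / sqrt A) = sqrt A * sqrt B"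
    by (simp_all add: field_simps)
  then show ?thesis
    using H[of "sqrt B / sqrt A"] True by simp
next
  case False
  show ?thesis
  proof (rule ccontr)
    assume "\<not> ?thesis"
    then have X: "0 < X" using False A B by auto
    show False
    proof (cases "A = 0")
      case True
      have t: "0 < (B + 1) / X" using X B by simp
      have "((B + 1) / X * A + B / ((B + 1) / X)) / 2 < X"
        using True X B by (auto simp: field_simps intro!: add_nonneg_pos)
      with H[OF t] show False by linarith
    next
      case False
      then have "B = 0" using \<open>\<not> (0 < A \<and> 0 < B)\<close> A B by simp
      have t: "0 < X / (A + 1)" using X A by simp
      have "(X / (A + 1) * A + B / (X / (A + 1))) / 2 < X"
        using \<open>B = 0\<close> X A by (auto simp: field_simps intro!: add_nonneg_pos)
      with H[OF t] show False by linarith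
    qed
  qed
qed

lemma norm_mult_cnj_le_weighted_mean:
  assumes t: "0 < t" and "0 < a" "0 < b" and ab: "a * b = 1"
  shows "cmod (u * cnj w) \<le> (t * (a * (cmod u)\<^sup>2) + b * (cmod w)\<^sup>2 / t) / 2"
proof -
  define x where "x = sqrt a * cmod u"
  define y where "y = sqrt b * cmod w"
  have "x * y = cmod (u * cnj w)"
    using ab unfolding x_def y_def by (simp add: norm_mult mult_ac flip: real_sqrt_mult)
  moreover have "x\<^sup>2 = a * (cmod u)\<^sup>2" "y\<^sup>2 = b * (cmod w)\<^sup>2"
    unfolding x_def y_def using assms by (simp_all add: power_mult_distrib)
  moreover have "0 \<le> (sqrt t * x - y / sqrt t)\<^sup>2" by simp
  then have "x * y \<le> (t * x\<^sup>2 + y\<^sup>2 / t) / 2"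
    using t by (simp add: power2_eq_square field_simps)
  ultimately show ?thesis by simp
qed

lemma norm_integral_mult_cnj_le_sob_norm:
  fixes U W :: "'a::euclidean_space \<Rightarrow> complex"
  assumes k: "0 < k" and U: "in_sob_ft k \<sigma> U" and W: "in_sob_ft k (- \<sigma>) W"
  shows "integrable lborel (\<lambda>\<xi>. U \<xi> * cnj (W \<xi>))"
    and "cmod (\<integral>\<xi>. U \<xi> * cnj (W \<xi>) \<partial>lborel) \<le> sob_norm_ft k \<sigma> U * sob_norm_ft k (- \<sigma>) W"
proof -
  define a :: "'a \<Rightarrow> real" where "a = sob_weight k \<sigma>"
  define b :: "'a \<Rightarrow> real" where "b = sob_weight k (- \<sigma>)"
  have ia: "integrable lborel (\<lambda>\<xi>. a \<xi> * (cmod (U \<xi>))\<^sup>2)"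
    and ib: "integrable lborel (\<lambda>\<xi>. b \<xi> * (cmod (W \<xi>))\<^sup>2)"
    using U W unfolding in_sob_ft_def a_def b_def by auto
  have pointwise: "cmod (U \<xi> * cnj (W \<xi>)) \<le> (t * (a \<xi> * (cmod (U \<xi>))\<^sup>2) + b \<xi> * (cmod (W \<xi>))\<^sup>2 / t) / 2"
    if "0 < t" for t and \<xi> :: 'a
    using norm_mult_cnj_le_weighted_mean[OF that sob_weight_pos[OF k] sob_weight_pos[OF k]]
      sob_weight_mult_uminus[OF k] unfolding a_def b_def by blast
  have "(cnj :: complex \<Rightarrow> complex) \<in> borel_measurable borel"
    by (intro borel_measurable_continuous_onI continuous_intros)
  then have meas: "(\<lambda>\<xi>. U \<xi> * cnj (W \<xi>)) \<in> borel_measurable lborel"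
    using U W measurable_compose[of W lborel borel cnj borel]
    unfolding in_sob_ft_def by (auto intro: borel_measurable_times)
  have ibound: "integrable lborel (\<lambda>\<xi>. (t * (a \<xi> * (cmod (U \<xi>))\<^sup>2) + b \<xi> * (cmod (W \<xi>))\<^sup>2 / t) / 2)" for t
    using ia ib by (intro integrable_divide integrable_add integrable_mult_right) auto
  show int: "integrable lborel (\<lambda>\<xi>. U \<xi> * cnj (W \<xi>))"
    by (rule Bochner_Integration.integrable_bound[OF ibound[of 1] meas])
      (use pointwise[of 1] in \<open>intro AE_I2, smt (verit) real_norm_def\<close>)
  have "cmod (\<integral>\<xi>. U \<xi> * cnj (W \<xi>) \<partial>lborel)
      \<le> sqrt (\<integral>\<xi>. a \<xi> * (cmod (U \<xi>))\<^sup>2 \<partial>lborel) * sqrt (\<integral>\<xi>. b \<xi> * (cmod (W \<xi>))\<^sup>2 \<partial>lborel)"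
  proof (rule le_sqrt_mult_if_le_scaled_mean)
    show "0 \<le> (\<integral>\<xi>. a \<xi> * (cmod (U \<xi>))\<^sup>2 \<partial>lborel)" "0 \<le> (\<integral>\<xi>. b \<xi> * (cmod (W \<xi>))\<^sup>2 \<partial>lborel)"
      unfolding a_def b_def sob_weight_def by (auto intro!: integral_nonneg_AE)
    fix t :: real assume t: "0 < t"
    have "cmod (\<integral>\<xi>. U \<xi> * cnj (W \<xi>) \<partial>lborel) \<le> (\<integral>\<xi>. cmod (U \<xi> * cnj (W \<xi>)) \<partial>lborel)"
      by (rule integral_norm_bound)
    also have "\<dots> \<le> (\<integral>\<xi>. (t * (a \<xi> * (cmod (U \<xi>))\<^sup>2) + b \<xi> * (cmod (W \<xi>))\<^sup>2 / t) / 2 \<partial>lborel)"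
      by (intro integral_mono integrable_norm int ibound pointwise t)
    also have "\<dots> = (t * (\<integral>\<xi>. a \<xi> * (cmod (U \<xi>))\<^sup>2 \<partial>lborel) + (\<integral>\<xi>. b \<xi> * (cmod (W \<xi>))\<^sup>2 \<partial>lborel) / t) / 2"
      using ia ib by simp
    finally show "cmod (\<integral>\<xi>. U \<xi> * cnj (W \<xi>) \<partial>lborel)
        \<le> (t * (\<integral>\<xi>. a \<xi> * (cmod (U \<xi>))\<^sup>2 \<partial>lborel) + (\<integral>\<xi>. b \<xi> * (cmod (W \<xi>))\<^sup>2 \<partial>lborel) / t) / 2" .
  qed
  then show "cmod (\<integral>\<xi>. U \<xi> * cnj (W \<xi>) \<partial>lborel) \<le> sob_norm_ft k \<sigma> U * sob_norm_ft k (- \<sigma>) W"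
    unfolding sob_norm_ft_def a_def b_def .
qed

lemma fourier_cnj: "fourier (\<lambda>x. cnj (\<phi> x)) (- \<xi>) = cnj (fourier \<phi> \<xi>)"
proof -
  have "(\<lambda>x. cis (- (- \<xi> \<bullet> x)) * cnj (\<phi> x)) = (\<lambda>x. cnj (cis (- (\<xi> \<bullet> x)) * \<phi> x))"
    by (simp add: cis_cnj)
  then show ?thesis
    unfolding fourier_def by (simp only: Bochner_Integration.integral_cnj) simp
qed

text \<open>Pairing with \<open>\<phi>\<close> only sees the restriction to \<open>G\<close>, because it is the distributional
  pairing with the test function \<open>cnj \<circ> \<phi>\<close>.\<close>
lemma same_restr_pairing_eq:
  assumes "same_restr G U V" and "\<phi> \<in> test_fun G"
  shows "(\<integral>\<xi>. U \<xi> * cnj (fourier \<phi> \<xi>) \<partial>lborel) = (\<integral>\<xi>. V \<xi> * cnj (fourier \<phi> \<xi>) \<partial>lborel)"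
  using assms test_fun_cnj[OF assms(2)] unfolding same_restr_def by (simp flip: fourier_cnj)

lemma sob_norm_restr_nonneg:
  assumes "in_sob_ft k \<sigma> V"
  shows "0 \<le> sob_norm_restr k \<sigma> G V"
  unfolding sob_norm_restr_def
proof (rule cInf_greatest)
  show "{sob_norm_ft k \<sigma> U |U. in_sob_ft k \<sigma> U \<and> same_restr G U V} \<noteq> {}"
    using assms by (auto simp: same_restr_def)
qed (auto simp: sob_norm_ft_def sob_weight_def intro!: integral_nonneg_AE)

lemma norm_pairing_le_sob_norm_restr:
  assumes k: "0 < k" and \<phi>: "\<phi> \<in> test_fun G"
    and V: "in_sob_ft k \<sigma> V" and \<phi>_sob: "in_sob_ft k (- \<sigma>) (fourier \<phi>)"
  shows "cmod (\<integral>\<xi>. V \<xi> * cnj (fourier \<phi> \<xi>) \<partial>lborel)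
      \<le> sob_norm_restr k \<sigma> G V * sob_norm_ft k (- \<sigma>) (fourier \<phi>)"
proof -
  define N where "N = sob_norm_ft k (- \<sigma>) (fourier \<phi>)"
  define P where "P = cmod (\<integral>\<xi>. V \<xi> * cnj (fourier \<phi> \<xi>) \<partial>lborel)"
  have bound: "P \<le> sob_norm_ft k \<sigma> U * N" if "in_sob_ft k \<sigma> U" "same_restr G U V" for U
    using norm_integral_mult_cnj_le_sob_norm(2)[OF k that(1) \<phi>_sob]
      same_restr_pairing_eq[OF that(2) \<phi>] unfolding P_def N_def by simp
  show ?thesis
  proof (cases "N = 0")
    case True
    have "same_restr G V V" by (simp add: same_restr_def)
    then show ?thesis
      using bound[OF V] True unfolding P_def N_def by simp
  next
    case False
    moreover have "0 \<le> N"
      unfolding N_def sob_norm_ft_def by (auto simp: sob_weight_def intro!: integral_nonneg_AE)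
    ultimately have "0 < N" by simp
    have "P / N \<le> sob_norm_restr k \<sigma> G V"
      unfolding sob_norm_restr_def
    proof (rule cInf_greatest)
      show "{sob_norm_ft k \<sigma> U |U. in_sob_ft k \<sigma> U \<and> same_restr G U V} \<noteq> {}"
        using V by (auto simp: same_restr_def)
    qed (use bound \<open>0 < N\<close> in \<open>auto simp: divide_le_eq\<close>)
    then show ?thesis
      using \<open>0 < N\<close> unfolding P_def N_def by (simp add: divide_le_eq)
  qed
qed

lemma Im_Tk_pairing_le_sob_norm_restr:
  assumes \<phi>: "\<phi> \<in> test_fun G" and k: "1 \<le> k"
  shows "(\<integral>\<xi>. Im (Tk_ft k \<phi> \<xi> * cnj (fourier \<phi> \<xi>)) \<partial>lborel)
      \<le> sob_norm_restr k (s - 1) G (Tk_ft k \<phi>) * sob_norm_ft k (1 - s) (fourier \<phi>)"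
proof -
  have k0: "0 < k" using k by simp
  have T: "in_sob_ft k (s - 1) (Tk_ft k \<phi>)"
    by (rule in_sob_ft_Tk_ft[OF k0 in_sob_ft_fourier[OF \<phi> k]])
  have F: "in_sob_ft k (- (s - 1)) (fourier \<phi>)"
    by (rule in_sob_ft_fourier[OF \<phi> k])
  have "(\<integral>\<xi>. Im (Tk_ft k \<phi> \<xi> * cnj (fourier \<phi> \<xi>)) \<partial>lborel)
      = Im (\<integral>\<xi>. Tk_ft k \<phi> \<xi> * cnj (fourier \<phi> \<xi>) \<partial>lborel)"
    by (rule integral_Im[OF norm_integral_mult_cnj_le_sob_norm(1)[OF k0 T F]])
  also have "\<dots> \<le> cmod (\<integral>\<xi>. Tk_ft k \<phi> \<xi> * cnj (fourier \<phi> \<xi>) \<partial>lborel)"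
    by (rule order_trans[OF abs_ge_self abs_Im_le_cmod])
  also have "\<dots> \<le> sob_norm_restr k (s - 1) G (Tk_ft k \<phi>) * sob_norm_ft k (- (s - 1)) (fourier \<phi>)"
    by (rule norm_pairing_le_sob_norm_restr[OF k0 \<phi> T F])
  finally show ?thesis by simp
qed

lemma eventually_Im_Tk_pairing_gt:
  assumes \<phi>: "\<phi> \<in> test_fun G" and M: "0 < (\<integral>\<xi>. (cmod (fourier \<phi> \<xi>))\<^sup>2 \<partial>lborel)"
    and C: "C < 1 / 2"
  shows "\<forall>\<^sub>F k in at_top.
      C * sob_norm_ft k s (fourier \<phi>) * sob_norm_ft k (1 - s) (fourier \<phi>)
        < (\<integral>\<xi>. Im (Tk_ft k \<phi> \<xi> * cnj (fourier \<phi> \<xi>)) \<partial>lborel)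
      \<and> 0 < sob_norm_ft k (1 - s) (fourier \<phi>)"
proof -
  define M where "M = (\<integral>\<xi>. (cmod (fourier \<phi> \<xi>))\<^sup>2 \<partial>lborel)"
  define n where "n \<sigma> k = sob_norm_ft k \<sigma> (fourier \<phi>) / k powr \<sigma>" for \<sigma> k
  define A where "A k = (\<integral>\<xi>. Im (Tk_ft k \<phi> \<xi> * cnj (fourier \<phi> \<xi>)) \<partial>lborel)" for k
  have n: "(n \<sigma> \<longlongrightarrow> sqrt M) at_top" for \<sigma>
    unfolding n_def M_def by (rule tendsto_sob_norm_ft_fourier[OF \<phi>])
  have "((\<lambda>k. A k / k - C * (n s k * n (1 - s) k)) \<longlongrightarrow> M / 2 - C * (sqrt M * sqrt M)) at_top"
    unfolding A_def M_def by (intro tendsto_intros tendsto_Im_Tk_pairing[OF \<phi>] n[unfolded M_def])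
  moreover have "M / 2 - C * (sqrt M * sqrt M) = M * (1 / 2 - C)"
    using M unfolding M_def by (simp add: algebra_simps)
  ultimately have "((\<lambda>k. A k / k - C * (n s k * n (1 - s) k)) \<longlongrightarrow> M * (1 / 2 - C)) at_top"
    by simp
  moreover have "0 < M * (1 / 2 - C)"
    using M C unfolding M_def by simp
  ultimately have "\<forall>\<^sub>F k in at_top. 0 < A k / k - C * (n s k * n (1 - s) k)"
    by (rule order_tendstoD(1))
  moreover have "\<forall>\<^sub>F k in at_top. 0 < n (1 - s) k"
    using order_tendstoD(1)[OF n] M unfolding M_def by simp
  ultimately show ?thesis
    using eventually_gt_at_top[of "0::real"]
  proof eventually_elim
    case (elim k)
    have "k powr s * k powr (1 - s) = k"
      using elim(3) by (simp add: powr_add[symmetric])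
    then have "sob_norm_ft k s (fourier \<phi>) * sob_norm_ft k (1 - s) (fourier \<phi>) = k * (n s k * n (1 - s) k)"
      unfolding n_def using elim(3) by (simp add: field_simps)
    moreover have "k * (C * (n s k * n (1 - s) k)) < A k"
      using elim(1,3) by (simp add: pos_less_divide_eq mult.commute)
    moreover have "0 < sob_norm_ft k (1 - s) (fourier \<phi>)"
      using elim(2,3) by (simp add: n_def zero_less_divide_iff)
    ultimately show ?case
      unfolding A_def by (simp add: mult_ac)
  qed
qed

lemma eventually_sob_norm_restr_Tk_ge:
  assumes \<phi>: "\<phi> \<in> test_fun G" and C: "C < 1 / 2"
  shows "\<forall>\<^sub>F k in at_top. C * sob_norm_ft k s (fourier \<phi>) \<le> sob_norm_restr k (s - 1) G (Tk_ft k \<phi>)"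
proof (cases "(\<integral>\<xi>. (cmod (fourier \<phi> \<xi>))\<^sup>2 \<partial>lborel) = 0")
  case True
  then have "AE \<xi> in lborel. fourier \<phi> \<xi> = 0"
    using integrable_norm_fourier_sq[OF \<phi>] by (subst (asm) integral_nonneg_eq_0_iff_AE) auto
  then have "sob_norm_ft k s (fourier \<phi>) = 0" for k
    by (rule sob_norm_ft_eq_0)
  moreover have "0 \<le> sob_norm_restr k (s - 1) G (Tk_ft k \<phi>)" if "1 \<le> k" for k
    using that by (intro sob_norm_restr_nonneg in_sob_ft_Tk_ft in_sob_ft_fourier[OF \<phi>]) auto
  ultimately have "C * sob_norm_ft k s (fourier \<phi>) \<le> sob_norm_restr k (s - 1) G (Tk_ft k \<phi>)"
    if "1 \<le> k" for k
    using that by simp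
  then show ?thesis
    by (rule eventually_mono[OF eventually_ge_at_top[of "1::real"]])
next
  case False
  then have "0 < (\<integral>\<xi>. (cmod (fourier \<phi> \<xi>))\<^sup>2 \<partial>lborel)"
    by (simp add: integral_nonneg_AE order_less_le)
  from eventually_Im_Tk_pairing_gt[OF \<phi> this C, where s = s] eventually_ge_at_top[of "1::real"]
  show ?thesis
  proof eventually_elim
    case (elim k)
    then have "C * sob_norm_ft k s (fourier \<phi>) * sob_norm_ft k (1 - s) (fourier \<phi>)
        < sob_norm_restr k (s - 1) G (Tk_ft k \<phi>) * sob_norm_ft k (1 - s) (fourier \<phi>)"
      using Im_Tk_pairing_le_sob_norm_restr[OF \<phi>, of k s] by linarith
    with elim show ?case
      by (simp add: mult_less_cancel_right_pos less_imp_le)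
  qed
qed

theorem mainTheorem11:
  fixes G :: "'a::euclidean_space set" and \<phi> :: "'a \<Rightarrow> complex" and s C :: real
  assumes dim: "DIM('a) = 1 \<or> DIM('a) = 2"
    and G_open: "open G" and G_bdd: "bounded G" and G_ne: "G \<noteq> {}"
    and phi_test: "\<phi> \<in> test_fun G" and phi_nz: "\<phi> \<noteq> (\<lambda>x. 0)"
    and C_lt: "C < 1 / (2 * sqrt 2)"
  shows "\<exists>k0>0. \<forall>k\<ge>k0.
           sob_norm_restr k (s - 1) G (Tk_ft k \<phi>) \<ge> C * sob_norm_ft k s (fourier \<phi>)"
proof -
  have "C < 1 / 2"
    using C_lt by (rule order.strict_trans) (simp add: field_simps)
  then obtain K where "\<And>k. K \<le> k \<Longrightarrow>
      C * sob_norm_ft k s (fourier \<phi>) \<le> sob_norm_restr k (s - 1) G (Tk_ft k \<phi>)"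
    using eventually_sob_norm_restr_Tk_ge[OF phi_test] unfolding eventually_at_top_linorder by blast
  then show ?thesis
    by (intro exI[of _ "max K 1"]) auto
qed

end
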